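(* Let $T$ be a semi-complete digraph on $n$ vertices that admits an ordering $(v_1,\dots,v_n)$ of cost at most $k$. Then the width of this ordering is at most $(4k)^{2/3}$.
   Context: A simple digraph (no loops, no multiple arcs) $T$ is semi-complete if for every pair of distinct vertices $v,w$ at least one of $(v,w),(w,v)$ is an arc. The cost of an ordering $(v_1,\dots,v_n)$ of $V(T)$ is $\sum_{(v_i,v_j)\in E(T),\,i>j}(i-j)$. The width of the ordering is $\max_{1\le t\le n-1}|E(\{v_{t+1},\dots,v_n\},\{v_1,\dots,v_t\})|$, where $E(A,B)$ is the set of arcs with tail in $A$ and head in $B$. *)

theory Defs
  imports Complex_Main
begin

definition simple_digraph :: "'a set \<Rightarrow> ('a \<times> 'a) set \<Rightarrow> bool" where
  "simple_digraph V E \<longleftrightarrow> finite V \<and> E \<subseteq> V \<times> V \<and> (\<forall>v. (v, v) \<notin> E)"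

definition semi_complete :: "'a set \<Rightarrow> ('a \<times> 'a) set \<Rightarrow> bool" where
  "semi_complete V E \<longleftrightarrow> simple_digraph V E \<and>
     (\<forall>v\<in>V. \<forall>w\<in>V. v \<noteq> w \<longrightarrow> (v, w) \<in> E \<or> (w, v) \<in> E)"

text \<open>An ordering of V is a list enumerating V without repetition; list index i
  corresponds to the paper's position i+1.\<close>

definition is_ordering :: "'a set \<Rightarrow> 'a list \<Rightarrow> bool" where
  "is_ordering V vs \<longleftrightarrow> distinct vs \<and> set vs = V"

definition ord_cost :: "('a \<times> 'a) set \<Rightarrow> 'a list \<Rightarrow> nat" where
  "ord_cost E vs = (\<Sum>(i, j) \<in> {(i, j). i < length vs \<and> j < i \<and> (vs ! i, vs ! j) \<in> E}. i - j)"

definition arcs_between :: "('a \<times> 'a) set \<Rightarrow> 'a set \<Rightarrow> 'a set \<Rightarrow> ('a \<times> 'a) set" where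
  "arcs_between E A B = {(u, w) \<in> E. u \<in> A \<and> w \<in> B}"

text \<open>Width: max over 1 \<le> t \<le> n-1 of |E({v_(t+1),...,v_n},{v_1,...,v_t})|
  (taken to be 0 when n \<le> 1, i.e. the maximum over an empty range).\<close>

definition ord_width :: "('a \<times> 'a) set \<Rightarrow> 'a list \<Rightarrow> nat" where
  "ord_width E vs = Max ({0} \<union>
     {card (arcs_between E (set (drop t vs)) (set (take t vs))) | t. 1 \<le> t \<and> t \<le> length vs - 1})"

end

theory Submission
  imports Defs "HOL-Library.Discrete_Functions"
begin

text \<open>Fix a cut of the ordering and let w be the number of arcs going backwards across it.
  At most D^2 backward arcs across a cut have length at most D, since both endpoints lie
  within distance D of the cut. Choosing D with 2 D^2 \<le> w < 2 (D + 1)^2, at least w/2 arcs have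
  length at least D + 1, so the cost k satisfies 2k \<ge> w (D + 1), and
  w^3 \<le> 2 (D + 1)^2 w^2 \<le> 8 k^2 \<le> (4k)^2.\<close>

lemma card_short_crossing_pairs_le:
  assumes "P \<subseteq> {(i, j). j < t \<and> t \<le> (i::nat) \<and> i - j \<le> D}"
  shows "card P \<le> D * D"
proof -
  have "P \<subseteq> {t..<t + D} \<times> {t - D..<t}" using assms by auto
  hence "card P \<le> card ({t..<t + D} \<times> {t - D..<t})" by (intro card_mono) auto
  also have "\<dots> \<le> D * D" by (simp add: card_cartesian_product) arith
  finally show ?thesis .
qed

lemma crossing_pairs_card_cube_le:
  assumes fin: "finite P" and crossing: "P \<subseteq> {(i, j). j < t \<and> t \<le> (i::nat)}"
  shows "(card P)^3 \<le> 8 * (\<Sum>(i, j)\<in>P. i - j)^2"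
proof -
  define w where "w = card P"
  define s where "s = (\<Sum>(i, j)\<in>P. i - j)"
  define D where "D = floor_sqrt (w div 2)"
  have lower: "2 * D^2 \<le> w" using floor_sqrt_power2_le[of "w div 2"] unfolding D_def by linarith
  have upper: "w < 2 * (D + 1)^2" using Suc_floor_sqrt_power2_gt[of "w div 2"] unfolding D_def by simp
  define L where "L = {p \<in> P. fst p - snd p \<le> D}"
  have card_L: "card L \<le> D * D"
    unfolding L_def by (rule card_short_crossing_pairs_le[of _ t]) (use crossing in auto)
  have card_long: "card (P - L) = w - card L"
    unfolding w_def by (rule card_Diff_subset) (auto simp: L_def intro: finite_subset[OF _ fin])
  have "(w - D * D) * (D + 1) \<le> card (P - L) * (D + 1)"
    using card_long card_L by (intro mult_le_mono1) simp
  also have "\<dots> = (\<Sum>p\<in>P - L. D + 1)" by simp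
  also have "\<dots> \<le> (\<Sum>(i, j)\<in>P - L. i - j)"
    by (rule sum_mono) (auto simp: L_def)
  also have "\<dots> \<le> s"
    unfolding s_def by (rule sum_mono2[OF fin]) auto
  finally have "(w - D * D) * (D + 1) \<le> s" .
  moreover have "w \<le> 2 * (w - D * D)" using lower by (simp add: power2_eq_square)
  ultimately have "w * (D + 1) \<le> 2 * s"
    by (metis mult.assoc mult_le_mono1 mult_le_mono2 order_trans)
  hence "(w * (D + 1))^2 \<le> (2 * s)^2" by (rule power_mono) simp
  hence sq: "w^2 * (D + 1)^2 \<le> 4 * s^2" by (simp only: power_mult_distrib) simp
  have "w^3 = w^2 * w" by (simp add: power3_eq_cube power2_eq_square)
  also have "\<dots> \<le> w^2 * (2 * (D + 1)^2)" using upper by (intro mult_le_mono2) simp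
  also have "\<dots> \<le> 8 * s^2" using sq by simp
  finally show ?thesis unfolding w_def s_def .
qed

lemma le_powr_two_thirds_if_cube_le_square:
  fixes x y :: real
  assumes "0 \<le> x" "0 \<le> y" "x^3 \<le> y^2"
  shows "x \<le> y powr (2/3)"
proof -
  have "x = (x powr 3) powr (1/3)"
    using assms(1) by (simp only: powr_powr) simp
  also have "\<dots> \<le> (y powr 2) powr (1/3)"
    using assms powr_realpow'[of x 3] powr_realpow'[of y 2] by (intro powr_mono2) auto
  also have "\<dots> = y powr (2/3)" by (simp only: powr_powr) simp
  finally show ?thesis .
qed

lemma in_set_drop_conv_nth:
  "u \<in> set (drop t xs) \<longleftrightarrow> (\<exists>i. t \<le> i \<and> i < length xs \<and> u = xs ! i)"
proof
  assume "u \<in> set (drop t xs)"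
  then obtain a where "a < length xs - t" "u = xs ! (t + a)" by (auto simp: in_set_conv_nth)
  thus "\<exists>i. t \<le> i \<and> i < length xs \<and> u = xs ! i" by (intro exI[of _ "t + a"]) auto
next
  assume "\<exists>i. t \<le> i \<and> i < length xs \<and> u = xs ! i"
  then obtain i where "t \<le> i" "i < length xs" "u = xs ! i" by blast
  thus "u \<in> set (drop t xs)" by (auto simp: in_set_conv_nth intro!: exI[of _ "i - t"])
qed

lemma in_set_take_conv_nth:
  "u \<in> set (take t xs) \<longleftrightarrow> (\<exists>j. j < t \<and> j < length xs \<and> u = xs ! j)"
  by (auto simp: in_set_conv_nth)

definition backward_cut_pairs :: "('a \<times> 'a) set \<Rightarrow> 'a list \<Rightarrow> nat \<Rightarrow> (nat \<times> nat) set" where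
  "backward_cut_pairs E vs t = {(i, j). i < length vs \<and> j < t \<and> t \<le> i \<and> (vs ! i, vs ! j) \<in> E}"

lemma finite_backward_cut_pairs: "finite (backward_cut_pairs E vs t)"
  by (rule finite_subset[of _ "{..<length vs} \<times> {..<t}"]) (auto simp: backward_cut_pairs_def)

lemma card_arcs_across_cut:
  assumes "distinct vs"
  shows "card (arcs_between E (set (drop t vs)) (set (take t vs))) = card (backward_cut_pairs E vs t)"
proof -
  let ?arc = "\<lambda>(i, j). (vs ! i, vs ! j)"
  have "arcs_between E (set (drop t vs)) (set (take t vs)) = ?arc ` backward_cut_pairs E vs t"
    by (auto simp: arcs_between_def backward_cut_pairs_def in_set_drop_conv_nth in_set_take_conv_nth)
  moreover have "inj_on ?arc (backward_cut_pairs E vs t)"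
    using assms by (auto simp: inj_on_def backward_cut_pairs_def nth_eq_iff_index_eq)
  ultimately show ?thesis by (simp add: card_image)
qed

lemma backward_cut_pairs_length_le_cost:
  "(\<Sum>(i, j)\<in>backward_cut_pairs E vs t. i - j) \<le> ord_cost E vs"
proof -
  let ?Q = "{(i, j). i < length vs \<and> j < i \<and> (vs ! i, vs ! j) \<in> E}"
  have "finite ?Q"
    by (rule finite_subset[of _ "{..<length vs} \<times> {..<length vs}"]) auto
  moreover have "backward_cut_pairs E vs t \<subseteq> ?Q"
    by (auto simp: backward_cut_pairs_def)
  ultimately show ?thesis
    unfolding ord_cost_def by (rule sum_mono2) simp
qed

lemma ord_width_attained:
  "\<exists>t. ord_width E vs = card (arcs_between E (set (drop t vs)) (set (take t vs)))"
proof -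
  let ?cut = "\<lambda>t. card (arcs_between E (set (drop t vs)) (set (take t vs)))"
  have "{?cut t | t. 1 \<le> t \<and> t \<le> length vs - 1} = ?cut ` {1..length vs - 1}"
    by auto
  hence "finite ({0} \<union> {?cut t | t. 1 \<le> t \<and> t \<le> length vs - 1})"
    by simp
  hence "ord_width E vs \<in> {0} \<union> {?cut t | t. 1 \<le> t \<and> t \<le> length vs - 1}"
    unfolding ord_width_def by (rule Max_in) simp
  thus ?thesis
  proof
    assume "ord_width E vs \<in> {0}"
    hence "ord_width E vs = ?cut 0" by (simp add: arcs_between_def)
    thus ?thesis ..
  qed blast
qed

theorem mainTheorem13:
  fixes V :: "'a set" and E :: "('a \<times> 'a) set" and vs :: "'a list" and k :: nat
  assumes "semi_complete V E"
    and "is_ordering V vs"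
    and "ord_cost E vs \<le> k"
  shows "real (ord_width E vs) \<le> (4 * real k) powr (2 / 3)"
proof -
  obtain t where "ord_width E vs = card (arcs_between E (set (drop t vs)) (set (take t vs)))"
    using ord_width_attained by blast
  with assms(2) have width: "ord_width E vs = card (backward_cut_pairs E vs t)"
    by (simp add: card_arcs_across_cut is_ordering_def)
  have "(card (backward_cut_pairs E vs t))^3 \<le> 8 * (\<Sum>(i, j)\<in>backward_cut_pairs E vs t. i - j)^2"
    by (rule crossing_pairs_card_cube_le[OF finite_backward_cut_pairs, of _ _ t])
       (auto simp: backward_cut_pairs_def)
  also have "\<dots> \<le> 8 * k^2"
    using backward_cut_pairs_length_le_cost[of E vs t] assms(3) by (simp add: power_mono)
  finally have "(ord_width E vs)^3 \<le> (4 * k)^2" unfolding width by (simp add: power_mult_distrib)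
  hence "real ((ord_width E vs)^3) \<le> real ((4 * k)^2)" by (rule of_nat_mono)
  hence "(real (ord_width E vs))^3 \<le> (4 * real k)^2" by simp
  thus ?thesis by (rule le_powr_two_thirds_if_cube_le_square[rotated 2]) simp_all
qed

end
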